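(* Let $n\ge2$ be an integer, $\sigma\ge0$, $R'>0$, and define $a_1=\frac{n}{2R'}$, $a_2=\frac{a_1}{n-1}$, $a_k=\min\big\{(1+\frac1{n-1})a_{k-1},\frac{\sqrt{n(n+\sigma A_{k-1})}}{2R'}\big\}$ for $k\ge3$, where $A_k=\sum_{i=1}^ka_i$. Let $K_0=\big\lceil\frac{\log n}{\log n-\log(n-1)}\big\rceil$. Then for all $k\ge K_0$, $A_k\ge\frac{n(k-K_0+n-1)}{2R'}$. *)

theory Defs
  imports "HOL-Analysis.Analysis"
begin

text \<open>aA n sigma R k = (a_k, A_k) for k \<ge> 1, with A_k = a_1 + ... + a_k.
  Index 0 is a dummy (a_0 = 0, A_0 = 0).\<close>
fun aA :: "nat \<Rightarrow> real \<Rightarrow> real \<Rightarrow> nat \<Rightarrow> real \<times> real" where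
  "aA n \<sigma> R 0 = (0, 0)"
| "aA n \<sigma> R (Suc 0) = (real n / (2 * R), real n / (2 * R))"
| "aA n \<sigma> R (Suc (Suc 0)) =
     (let a1 = real n / (2 * R); a2 = a1 / (real n - 1) in (a2, a1 + a2))"
| "aA n \<sigma> R (Suc (Suc (Suc k))) =
     (let (ap, Ap) = aA n \<sigma> R (Suc (Suc k));
          ak = min ((1 + 1 / (real n - 1)) * ap)
                   (sqrt (real n * (real n + \<sigma> * Ap)) / (2 * R))
      in (ak, Ap + ak))"

definition seq_a :: "nat \<Rightarrow> real \<Rightarrow> real \<Rightarrow> nat \<Rightarrow> real" where
  "seq_a n \<sigma> R k = fst (aA n \<sigma> R k)"

definition seq_A :: "nat \<Rightarrow> real \<Rightarrow> real \<Rightarrow> nat \<Rightarrow> real" where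
  "seq_A n \<sigma> R k = (\<Sum>i=1..k. seq_a n \<sigma> R i)"

end

theory Submission
  imports Defs
begin

text \<open>Write c = n / (2 R') and q = n / (n - 1) = 1 + 1 / (n - 1). As \<sigma> A(k) \<ge> 0, the square-root
  term is at least c, so a(k+1) \<ge> min (q a(k)) c: from a(2) = c / (n - 1) on, the terms grow
  at least geometrically until they reach c. While they have not, A(k+1) \<ge> c q^k, because
  c q^k + c q^k / (n - 1) = c q^(k+1). The constant K0 = \<lceil>log_q n\<rceil> satisfies q^(K0-1) \<ge> n - 1,
  hence A(K0) \<ge> c (n - 1) and every later term is at least c.\<close>

lemma snd_aA_eq_seq_A: "snd (aA n s R k) = seq_A n s R k"
proof (induction n s R k rule: aA.induct)
  case (4 n s R k)
  then show ?case
    by (simp add: Let_def split_def seq_A_def seq_a_def)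
qed (simp_all add: Let_def seq_A_def seq_a_def numeral_2_eq_2)

lemma seq_A_Suc: "seq_A n s R (Suc k) = seq_A n s R k + seq_a n s R (Suc k)"
  by (simp add: seq_A_def)

lemma seq_a_1: "seq_a n s R (Suc 0) = real n / (2 * R)"
  by (simp add: seq_a_def)

lemma seq_a_2: "seq_a n s R (Suc (Suc 0)) = real n / (2 * R) / (real n - 1)"
  by (simp add: seq_a_def Let_def)

lemma seq_a_Suc_Suc_Suc:
  "seq_a n s R (Suc (Suc (Suc k))) =
     min ((1 + 1 / (real n - 1)) * seq_a n s R (Suc (Suc k)))
         (sqrt (real n * (real n + s * seq_A n s R (Suc (Suc k)))) / (2 * R))"
  by (simp add: seq_a_def Let_def split_def snd_aA_eq_seq_A[symmetric])

lemma seq_a_pos_and_seq_A_nonneg: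
  assumes "n \<ge> 2" "s \<ge> 0" "R > 0"
  shows "0 < seq_a n s R (Suc k) \<and> 0 \<le> seq_A n s R (Suc k)"
proof (induction k)
  case 0
  then show ?case using assms by (simp add: seq_A_def seq_a_1)
next
  case (Suc k)
  have "0 < seq_a n s R (Suc (Suc k))"
  proof (cases k)
    case 0
    then show ?thesis using assms by (simp add: seq_a_2)
  next
    case (Suc j)
    with Suc.IH have "0 < seq_a n s R (Suc (Suc j))" "0 \<le> seq_A n s R (Suc (Suc j))"
      by simp_all
    then show ?thesis
      using Suc assms by (simp add: seq_a_Suc_Suc_Suc add_pos_nonneg)
  qed
  with Suc.IH show ?case by (simp add: seq_A_Suc)
qed

lemma seq_a_pos:
  assumes "n \<ge> 2" "s \<ge> 0" "R > 0"
  shows "0 < seq_a n s R (Suc k)"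
  using seq_a_pos_and_seq_A_nonneg[OF assms] by blast

lemma seq_A_nonneg:
  assumes "n \<ge> 2" "s \<ge> 0" "R > 0"
  shows "0 \<le> seq_A n s R k"
  using seq_a_pos_and_seq_A_nonneg[OF assms] by (cases k) (auto simp: seq_A_def)

lemma seq_a_Suc_ge_min:
  assumes "n \<ge> 2" "s \<ge> 0" "R > 0"
  shows "min (real n / (real n - 1) * seq_a n s R (Suc (Suc k))) (real n / (2 * R))
           \<le> seq_a n s R (Suc (Suc (Suc k)))"
proof -
  have "real n / (2 * R) = sqrt (real n * real n) / (2 * R)"
    by simp
  also have "\<dots> \<le> sqrt (real n * (real n + s * seq_A n s R (Suc (Suc k)))) / (2 * R)"
    using assms seq_A_nonneg[OF assms] by (intro divide_right_mono real_sqrt_le_mono) auto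
  finally have sqrt_bound: "real n / (2 * R) \<le> \<dots>" .
  have ratio: "1 + 1 / (real n - 1) = real n / (real n - 1)"
    using assms(1) by (simp add: field_simps)
  show ?thesis
    unfolding seq_a_Suc_Suc_Suc ratio by (intro min.mono order_refl sqrt_bound)
qed

lemma min_growth_iterate:
  fixes a :: "nat \<Rightarrow> 'a :: linordered_idom"
  assumes "q \<ge> 1" "c \<ge> 0"
    and step: "\<And>k. m \<le> k \<Longrightarrow> min (q * a k) c \<le> a (Suc k)"
  shows "min (q ^ j * a m) c \<le> a (m + j)"
proof (induction j)
  case 0
  then show ?case by simp
next
  case (Suc j)
  have "c \<le> q * c"
    using assms(1,2) mult_right_mono[of 1 q c] by simp
  then have "min (q ^ Suc j * a m) c = min (q * min (q ^ j * a m) c) c"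
    using assms(1) by (simp add: min_mult_distrib_left min.assoc min_absorb2)
  also have "\<dots> \<le> min (q * a (m + j)) c"
    using Suc.IH assms(1) by (intro min.mono mult_left_mono) auto
  also have "\<dots> \<le> a (m + Suc j)"
    using step[of "m + j"] by simp
  finally show ?case .
qed

lemma seq_a_lower:
  assumes "n \<ge> 2" "s \<ge> 0" "R > 0"
  shows "min ((real n / (real n - 1)) ^ k * (real n / (2 * R) / (real n - 1))) (real n / (2 * R))
           \<le> seq_a n s R (Suc (Suc k))"
proof -
  have "min ((real n / (real n - 1)) ^ k * seq_a n s R 2) (real n / (2 * R)) \<le> seq_a n s R (2 + k)"
  proof (rule min_growth_iterate)
    fix k :: nat
    assume "2 \<le> k"
    then obtain j where "k = Suc (Suc j)"
      using add_2_eq_Suc le_Suc_ex by blast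
    then show "min (real n / (real n - 1) * seq_a n s R k) (real n / (2 * R)) \<le> seq_a n s R (Suc k)"
      using seq_a_Suc_ge_min[OF assms] by simp
  qed (use assms in auto)
  then show ?thesis
    by (simp add: seq_a_2 numeral_2_eq_2)
qed

lemma seq_A_lower:
  assumes "n \<ge> 2" "s \<ge> 0" "R > 0"
  shows "real n / (2 * R) * min ((real n / (real n - 1)) ^ k) (real n - 1) \<le> seq_A n s R (Suc k)"
proof (induction k)
  case 0
  then show ?case using assms by (simp add: seq_A_def seq_a_1 mult_left_le)
next
  case (Suc k)
  define c q where "c = real n / (2 * R)" and "q = real n / (real n - 1)"
  have c: "c > 0" and n1: "real n - 1 > 0"
    using assms by (simp_all add: c_def)
  have A: "seq_A n s R (Suc (Suc k)) = seq_A n s R (Suc k) + seq_a n s R (Suc (Suc k))"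
    by (rule seq_A_Suc)
  show ?case
  proof (cases "real n - 1 \<le> q ^ k")
    case True
    then have "c * (real n - 1) \<le> seq_A n s R (Suc k)"
      using Suc by (simp add: c_def q_def)
    moreover have "c * min (q ^ Suc k) (real n - 1) \<le> c * (real n - 1)"
      using c by (intro mult_left_mono) auto
    ultimately show ?thesis
      using A seq_a_pos[OF assms, of "Suc k"] unfolding c_def q_def by linarith
  next
    case False
    then have "c * q ^ k \<le> seq_A n s R (Suc k)"
      using Suc by (simp add: c_def q_def)
    moreover have "q ^ k * (c / (real n - 1)) \<le> seq_a n s R (Suc (Suc k))"
    proof -
      have "q ^ k / (real n - 1) \<le> 1"
        using False n1 by simp
      then have "q ^ k * (c / (real n - 1)) \<le> c"
        using mult_left_le[of "q ^ k / (real n - 1)" c] c by (simp add: mult.commute)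
      then show ?thesis
        using seq_a_lower[OF assms, of k, folded c_def q_def] by (simp add: min_absorb1)
    qed
    moreover have "c * q ^ k + q ^ k * (c / (real n - 1)) = c * q ^ Suc k"
      using n1 by (simp add: q_def field_simps)
    moreover have "c * min (q ^ Suc k) (real n - 1) \<le> c * q ^ Suc k"
      using c by (intro mult_left_mono) auto
    ultimately show ?thesis
      using A unfolding c_def q_def by linarith
  qed
qed

lemma seq_A_ge_linear_tail:
  assumes "\<And>k. m \<le> k \<Longrightarrow> c \<le> seq_a n s R (Suc k)" and "m \<le> k"
  shows "seq_A n s R m + real (k - m) * c \<le> seq_A n s R k"
  using \<open>m \<le> k\<close>
proof (induction k rule: dec_induct)
  case base
  then show ?case by simp
next
  case (step k)
  then show ?case
    using assms(1)[of k] by (simp add: seq_A_Suc Suc_diff_le algebra_simps)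
qed

lemma le_power_nat_ceiling_log:
  fixes b y :: real
  assumes "b > 1" "y > 0"
  shows "y \<le> b ^ nat \<lceil>log b y\<rceil>"
proof -
  have "y = b powr log b y"
    using assms by simp
  also have "\<dots> \<le> b powr real (nat \<lceil>log b y\<rceil>)"
    using assms by (intro powr_mono) linarith+
  also have "\<dots> = b ^ nat \<lceil>log b y\<rceil>"
    using assms by (simp add: powr_realpow)
  finally show ?thesis .
qed

lemma K0_bounds:
  assumes "n \<ge> 2"
  defines "K0 \<equiv> nat \<lceil>ln (real n) / (ln (real n) - ln (real n - 1))\<rceil>"
  shows "1 \<le> K0" and "real n - 1 \<le> (real n / (real n - 1)) ^ (K0 - 1)"
proof -
  define q where "q = real n / (real n - 1)"
  have n1: "real n - 1 > 0" and q: "q > 1"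
    using assms(1) by (simp_all add: q_def)
  have "ln (real n) - ln (real n - 1) = ln q"
    using n1 by (simp add: q_def ln_div)
  then have "K0 = nat \<lceil>log q (real n)\<rceil>"
    by (simp add: K0_def log_def)
  then have n_le: "real n \<le> q ^ K0"
    using le_power_nat_ceiling_log[OF q, of "real n"] assms(1) by simp
  then show K1: "1 \<le> K0"
    using assms(1) by (cases K0) auto
  have "real n \<le> real n / (real n - 1) * q ^ (K0 - 1)"
    using n_le K1 by (simp add: q_def power_eq_if)
  then have "real n * (real n - 1) \<le> real n * q ^ (K0 - 1)"
    using n1 by (simp add: field_simps)
  then show "real n - 1 \<le> (real n / (real n - 1)) ^ (K0 - 1)"
    using assms(1) by (simp add: q_def)
qed

theorem proposition4:
  fixes n :: nat and \<sigma> R' :: real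
  assumes "n \<ge> 2" and "\<sigma> \<ge> 0" and "R' > 0"
  defines "K0 \<equiv> nat \<lceil>ln (real n) / (ln (real n) - ln (real n - 1))\<rceil>"
  shows "\<forall>k \<ge> K0. seq_A n \<sigma> R' k \<ge> real n * (real k - real K0 + real n - 1) / (2 * R')"
proof (intro allI impI)
  define c q where "c = real n / (2 * R')" and "q = real n / (real n - 1)"
  have K1: "1 \<le> K0" and qK: "real n - 1 \<le> q ^ (K0 - 1)"
    using K0_bounds[OF assms(1)] unfolding K0_def q_def by auto
  have n1: "real n - 1 > 0" and "c > 0" and "q \<ge> 1"
    using assms by (simp_all add: c_def q_def)
  have start: "c * (real n - 1) \<le> seq_A n \<sigma> R' K0"
    using seq_A_lower[OF assms(1-3), of "K0 - 1"] K1 qK by (simp add: c_def q_def)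
  have tail: "c \<le> seq_a n \<sigma> R' (Suc j)" if "K0 \<le> j" for j
  proof -
    have "q ^ (K0 - 1) \<le> q ^ (j - 1)"
      using that \<open>q \<ge> 1\<close> by (intro power_increasing diff_le_mono)
    then have "1 \<le> q ^ (j - 1) / (real n - 1)"
      using qK n1 by simp
    then have "c \<le> q ^ (j - 1) * (c / (real n - 1))"
      using mult_left_mono[of 1 "q ^ (j - 1) / (real n - 1)" c] \<open>c > 0\<close> by (simp add: mult.commute)
    moreover have "Suc (Suc (j - 1)) = Suc j"
      using that K1 by simp
    ultimately show ?thesis
      using seq_a_lower[OF assms(1-3), of "j - 1", folded c_def q_def] by (simp add: min_absorb2)
  qed
  fix k
  assume "K0 \<le> k"
  have "real n * (real k - real K0 + real n - 1) / (2 * R') = c * (real n - 1) + real (k - K0) * c"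
    using \<open>K0 \<le> k\<close> assms(3) by (simp add: c_def of_nat_diff field_simps)
  also have "\<dots> \<le> seq_A n \<sigma> R' K0 + real (k - K0) * c"
    using start by simp
  also have "\<dots> \<le> seq_A n \<sigma> R' k"
    using seq_A_ge_linear_tail[OF tail \<open>K0 \<le> k\<close>] .
  finally show "real n * (real k - real K0 + real n - 1) / (2 * R') \<le> seq_A n \<sigma> R' k" .
qed

end
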